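(* Let $G$ be a graph with diameter $h$ and with hyperbolicity $\delta(G)=h$. Then for each quadruple $a,b,c,d\in V(G)$ with $\delta(a,b,c,d)=h$, exactly two disjoint pairs among $a,b,c,d$ are at distance $h$ and all the other pairs are at distance $h/2$.
   Context: For a graph $G=(V,E)$, $\mathrm{dist}(x,y)$ denotes the length of a shortest $x$-$y$ path ($\infty$ if none exists). For $a,b,c,d\in V$ let $D_1=\mathrm{dist}(a,b)+\mathrm{dist}(c,d)$, $D_2=\mathrm{dist}(a,c)+\mathrm{dist}(b,d)$, $D_3=\mathrm{dist}(a,d)+\mathrm{dist}(b,c)$, and define $\delta(a,b,c,d)=|D_i-D_j|$ where $\{i,j,k\}=\{1,2,3\}$ and $D_k\le\min\{D_i,D_j\}$ (i.e., the difference of the two largest of the three sums). The hyperbolicity of $G$ is $\delta(G)=\max_{a,b,c,d\in V}\delta(a,b,c,d)$. *)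

theory Defs
  imports Main "HOL-Library.Extended_Nat"
begin

definition simple_graph :: "'a set \<Rightarrow> ('a \<Rightarrow> 'a \<Rightarrow> bool) \<Rightarrow> bool" where
  "simple_graph V E \<longleftrightarrow> finite V \<and> V \<noteq> {} \<and>
     (\<forall>x y. E x y \<longrightarrow> x \<in> V \<and> y \<in> V \<and> E y x \<and> x \<noteq> y)"

fun walk :: "('a \<Rightarrow> 'a \<Rightarrow> bool) \<Rightarrow> 'a list \<Rightarrow> bool" where
  "walk E [] = False"
| "walk E [x] = True"
| "walk E (x # y # xs) = (E x y \<and> walk E (y # xs))"

text \<open>Graph distance: length of a shortest walk; infinity if none exists.\<close>
definition gdist :: "('a \<Rightarrow> 'a \<Rightarrow> bool) \<Rightarrow> 'a \<Rightarrow> 'a \<Rightarrow> enat" where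
  "gdist E x y = (INF xs \<in> {xs. walk E xs \<and> hd xs = x \<and> last xs = y}. enat (length xs - 1))"

text \<open>delta(a,b,c,d): difference of the two largest of the three distance sums.\<close>
definition four_point_delta :: "('a \<Rightarrow> 'a \<Rightarrow> bool) \<Rightarrow> 'a \<Rightarrow> 'a \<Rightarrow> 'a \<Rightarrow> 'a \<Rightarrow> enat" where
  "four_point_delta E a b c d =
     (let D1 = gdist E a b + gdist E c d;
          D2 = gdist E a c + gdist E b d;
          D3 = gdist E a d + gdist E b c
      in max D1 (max D2 D3) - max (min D1 D2) (max (min D1 D3) (min D2 D3)))"

definition hyperbolicity :: "'a set \<Rightarrow> ('a \<Rightarrow> 'a \<Rightarrow> bool) \<Rightarrow> enat" where
  "hyperbolicity V E = (SUP q \<in> V \<times> V \<times> V \<times> V.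
      (case q of (a, b, c, d) \<Rightarrow> four_point_delta E a b c d))"

definition diameter :: "'a set \<Rightarrow> ('a \<Rightarrow> 'a \<Rightarrow> bool) \<Rightarrow> enat" where
  "diameter V E = (SUP p \<in> V \<times> V. gdist E (fst p) (snd p))"

end

theory Submission
  imports Defs
begin

text \<open>
  Write \<open>\<rho>\<close> for the distance and \<open>D\<^sub>1 = \<rho>(a,b) + \<rho>(c,d)\<close>, \<open>D\<^sub>2\<close>, \<open>D\<^sub>3\<close> for the three sums, and
  say \<open>D\<^sub>1\<close> is the largest, so \<open>D\<^sub>1 \<ge> D\<^sub>2 + h\<close> and \<open>D\<^sub>1 \<ge> D\<^sub>3 + h\<close>. Adding to these the triangle
  inequalities bounding \<open>\<rho>(a,b)\<close> via \<open>c\<close> or \<open>d\<close> and \<open>\<rho>(c,d)\<close> via \<open>a\<close> or \<open>b\<close> gives \<open>2\<rho>(x,y) \<ge> h\<close> for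
  \<open>x \<in> {a,b}\<close>, \<open>y \<in> {c,d}\<close>. Hence \<open>D\<^sub>2, D\<^sub>3 \<ge> h\<close> and \<open>D\<^sub>1 \<ge> 2h\<close>; since no distance exceeds the
  diameter \<open>h\<close>, this forces \<open>\<rho>(a,b) = \<rho>(c,d) = h\<close> and \<open>D\<^sub>2 = D\<^sub>3 = h\<close>, which pins the other four
  distances to \<open>h/2\<close>.
\<close>

lemma walk_not_Nil: "walk E xs \<Longrightarrow> xs \<noteq> []"
  by (cases xs) auto

lemma walk_snoc: "walk E xs \<Longrightarrow> E (last xs) y \<Longrightarrow> walk E (xs @ [y])"
  by (induction E xs rule: walk.induct) auto

lemma walk_rev:
  assumes "\<And>x y. E x y \<Longrightarrow> E y x"
  shows "walk E xs \<Longrightarrow> walk E (rev xs)"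
proof (induction xs rule: induct_list012)
  case (3 x y zs)
  then have "walk E (rev (y # zs))" "E x y"
    by simp_all
  then show ?case
    using walk_snoc[of E "rev (y # zs)" x] assms[of x y] by (simp add: last_rev)
qed auto

lemma walk_append: "walk E xs \<Longrightarrow> walk E ys \<Longrightarrow> last xs = hd ys \<Longrightarrow> walk E (xs @ tl ys)"
proof (induction E xs rule: walk.induct)
  case (2 E x)
  then show ?case by (cases ys) auto
qed auto

lemma gdist_le_walk: "walk E xs \<Longrightarrow> gdist E (hd xs) (last xs) \<le> enat (length xs - 1)"
  unfolding gdist_def by (rule INF_lower) simp

lemma gdist_shortest_walk:
  assumes "gdist E x y \<noteq> \<infinity>"
  obtains xs where "walk E xs" "hd xs = x" "last xs = y" "gdist E x y = enat (length xs - 1)"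
proof -
  let ?L = "(\<lambda>xs. enat (length xs - 1)) ` {xs. walk E xs \<and> hd xs = x \<and> last xs = y}"
  have "?L \<noteq> {}"
    using assms unfolding gdist_def by (metis Inf_empty top_enat_def)
  then obtain l where "l \<in> ?L"
    by blast
  then have "Inf ?L \<in> ?L"
    by (rule wellorder_InfI)
  then obtain xs where "walk E xs" "hd xs = x" "last xs = y" "Inf ?L = enat (length xs - 1)"
    by blast
  then show ?thesis
    by (intro that) (simp_all add: gdist_def)
qed

lemma gdist_commute:
  assumes "\<And>x y. E x y \<Longrightarrow> E y x"
  shows "gdist E x y = gdist E y x"
proof -
  have "gdist E u v \<le> gdist E v u" for u v
    unfolding gdist_def[of E v u]
  proof (rule INF_greatest)
    fix xs assume "xs \<in> {xs. walk E xs \<and> hd xs = v \<and> last xs = u}"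
    then have "walk E (rev xs)" "hd (rev xs) = u" "last (rev xs) = v"
      using walk_rev[OF assms] walk_not_Nil by (auto simp: hd_rev last_rev)
    then show "gdist E u v \<le> enat (length xs - 1)"
      using gdist_le_walk[of E "rev xs"] by simp
  qed
  then show ?thesis
    using order_antisym by blast
qed

lemma gdist_triangle: "gdist E x y \<le> gdist E x z + gdist E z y"
proof (cases "gdist E x z = \<infinity> \<or> gdist E z y = \<infinity>")
  case False
  then have "gdist E x z \<noteq> \<infinity>" "gdist E z y \<noteq> \<infinity>"
    by simp_all
  then obtain xs ys where
    xs: "walk E xs" "hd xs = x" "last xs = z" "gdist E x z = enat (length xs - 1)" and
    ys: "walk E ys" "hd ys = z" "last ys = y" "gdist E z y = enat (length ys - 1)"
    by (metis gdist_shortest_walk)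
  obtain w ws where ys_Cons: "ys = w # ws"
    using ys(1) walk_not_Nil by (cases ys) auto
  obtain v vs where xs_Cons: "xs = v # vs"
    using xs(1) walk_not_Nil by (cases xs) auto
  have "hd (xs @ tl ys) = x" "last (xs @ tl ys) = y"
    and "length (xs @ tl ys) - 1 = (length xs - 1) + (length ys - 1)"
    using xs(2,3) ys(2,3) by (auto simp: xs_Cons ys_Cons last_append)
  then show ?thesis
    using gdist_le_walk[OF walk_append[OF xs(1) ys(1)]] xs(3,4) ys(2,4) by simp
qed auto

lemma gdist_le_diameter:
  assumes "x \<in> V" "y \<in> V"
  shows "gdist E x y \<le> diameter V E"
  using SUP_upper[of "(x, y)" "V \<times> V" "\<lambda>p. gdist E (fst p) (snd p)"] assms
  unfolding diameter_def by simp

definition gap_two_largest :: "'b::{linorder,minus} \<Rightarrow> 'b \<Rightarrow> 'b \<Rightarrow> 'b" where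
  "gap_two_largest D\<^sub>1 D\<^sub>2 D\<^sub>3 =
     max D\<^sub>1 (max D\<^sub>2 D\<^sub>3) - max (min D\<^sub>1 D\<^sub>2) (max (min D\<^sub>1 D\<^sub>3) (min D\<^sub>2 D\<^sub>3))"

lemma four_point_delta_gap:
  "four_point_delta E a b c d =
     gap_two_largest (gdist E a b + gdist E c d) (gdist E a c + gdist E b d) (gdist E a d + gdist E b c)"
  unfolding four_point_delta_def gap_two_largest_def Let_def ..

lemma gap_two_largest_enat:
  "gap_two_largest (enat x) (enat y) (enat z) = enat (gap_two_largest x y z)"
  unfolding gap_two_largest_def
  by (simp only: max_enat_simps(1) min_enat_simps(1) idiff_enat_enat)

lemma gap_two_largest_cases:
  fixes D\<^sub>1 D\<^sub>2 D\<^sub>3 h :: nat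
  assumes "gap_two_largest D\<^sub>1 D\<^sub>2 D\<^sub>3 = h"
  shows "D\<^sub>2 + h \<le> D\<^sub>1 \<and> D\<^sub>3 + h \<le> D\<^sub>1 \<or> D\<^sub>1 + h \<le> D\<^sub>2 \<and> D\<^sub>3 + h \<le> D\<^sub>2 \<or> D\<^sub>1 + h \<le> D\<^sub>3 \<and> D\<^sub>2 + h \<le> D\<^sub>3"
  using assms unfolding gap_two_largest_def by (simp add: max_def min_def split: if_splits; arith)

lemma extremal_quadruple_pairing:
  fixes \<rho> :: "'a \<Rightarrow> 'a \<Rightarrow> nat"
  assumes commute: "\<forall>x\<in>S. \<forall>y\<in>S. \<rho> x y = \<rho> y x"
    and triangle: "\<forall>x\<in>S. \<forall>y\<in>S. \<forall>z\<in>S. \<rho> x y \<le> \<rho> x z + \<rho> z y"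
    and bounded: "\<forall>x\<in>S. \<forall>y\<in>S. \<rho> x y \<le> h"
    and S: "a \<in> S" "b \<in> S" "c \<in> S" "d \<in> S"
    and gap: "\<rho> a c + \<rho> b d + h \<le> \<rho> a b + \<rho> c d" "\<rho> a d + \<rho> b c + h \<le> \<rho> a b + \<rho> c d"
  shows "\<rho> a b = h \<and> \<rho> c d = h \<and> 2 * \<rho> a c = h \<and> 2 * \<rho> a d = h \<and> 2 * \<rho> b c = h \<and> 2 * \<rho> b d = h"
  using triangle[rule_format, of a b c] triangle[rule_format, of a b d] triangle[rule_format, of c d a]
    triangle[rule_format, of c d b] commute[rule_format, of c b] commute[rule_format, of d b]
    commute[rule_format, of c a] bounded[rule_format, of a b] bounded[rule_format, of c d] S gap
  by auto

lemma extremal_quadruple_trichotomy: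
  fixes \<rho> :: "'a \<Rightarrow> 'a \<Rightarrow> nat"
  assumes metric: "\<forall>x\<in>S. \<forall>y\<in>S. \<rho> x y = \<rho> y x"
      "\<forall>x\<in>S. \<forall>y\<in>S. \<forall>z\<in>S. \<rho> x y \<le> \<rho> x z + \<rho> z y" "\<forall>x\<in>S. \<forall>y\<in>S. \<rho> x y \<le> h"
    and S: "a \<in> S" "b \<in> S" "c \<in> S" "d \<in> S"
    and gap: "gap_two_largest (\<rho> a b + \<rho> c d) (\<rho> a c + \<rho> b d) (\<rho> a d + \<rho> b c) = h"
  shows "\<rho> a b = h \<and> \<rho> c d = h \<and> 2 * \<rho> a c = h \<and> 2 * \<rho> a d = h \<and> 2 * \<rho> b c = h \<and> 2 * \<rho> b d = h
    \<or> \<rho> a c = h \<and> \<rho> b d = h \<and> 2 * \<rho> a b = h \<and> 2 * \<rho> a d = h \<and> 2 * \<rho> b c = h \<and> 2 * \<rho> c d = h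
    \<or> \<rho> a d = h \<and> \<rho> b c = h \<and> 2 * \<rho> a b = h \<and> 2 * \<rho> a c = h \<and> 2 * \<rho> b d = h \<and> 2 * \<rho> c d = h"
proof -
  note pairing = extremal_quadruple_pairing[OF metric]
  have commute: "\<rho> c b = \<rho> b c" "\<rho> d b = \<rho> b d" "\<rho> d c = \<rho> c d"
    using metric(1) S by blast+
  consider
      "\<rho> a c + \<rho> b d + h \<le> \<rho> a b + \<rho> c d" "\<rho> a d + \<rho> b c + h \<le> \<rho> a b + \<rho> c d"
    | "\<rho> a b + \<rho> c d + h \<le> \<rho> a c + \<rho> b d" "\<rho> a d + \<rho> b c + h \<le> \<rho> a c + \<rho> b d"
    | "\<rho> a b + \<rho> c d + h \<le> \<rho> a d + \<rho> b c" "\<rho> a c + \<rho> b d + h \<le> \<rho> a d + \<rho> b c"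
    using gap_two_largest_cases[OF gap] by blast
  then show ?thesis
  proof cases
    case 1
    then show ?thesis using pairing[OF S] by blast
  next
    case 2
    then show ?thesis using pairing[OF S(1,3,2,4)] commute by simp
  next
    case 3
    then show ?thesis using pairing[OF S(1,4,2,3)] commute by simp
  qed
qed

lemma finite_diameter_obtains_nat_metric:
  assumes "simple_graph V E" and "diameter V E = enat h"
  obtains \<rho> :: "'a \<Rightarrow> 'a \<Rightarrow> nat" where "\<forall>x\<in>V. \<forall>y\<in>V. gdist E x y = enat (\<rho> x y)"
    and "\<forall>x\<in>V. \<forall>y\<in>V. \<rho> x y = \<rho> y x"
    and "\<forall>x\<in>V. \<forall>y\<in>V. \<forall>z\<in>V. \<rho> x y \<le> \<rho> x z + \<rho> z y"
    and "\<forall>x\<in>V. \<forall>y\<in>V. \<rho> x y \<le> h"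
proof
  let ?\<rho> = "\<lambda>x y. the_enat (gdist E x y)"
  have "\<And>x y. E x y \<Longrightarrow> E y x"
    using assms(1) unfolding simple_graph_def by blast
  then show "\<forall>x\<in>V. \<forall>y\<in>V. ?\<rho> x y = ?\<rho> y x"
    using gdist_commute by metis
  have bounded: "gdist E x y \<le> enat h" if "x \<in> V" "y \<in> V" for x y
    using gdist_le_diameter[OF that, of E] assms(2) by simp
  then show finite: "\<forall>x\<in>V. \<forall>y\<in>V. gdist E x y = enat (?\<rho> x y)"
    by (metis enat_ile the_enat.simps)
  with bounded show "\<forall>x\<in>V. \<forall>y\<in>V. ?\<rho> x y \<le> h"
    by (metis enat_ord_simps(1))
  show "\<forall>x\<in>V. \<forall>y\<in>V. \<forall>z\<in>V. ?\<rho> x y \<le> ?\<rho> x z + ?\<rho> z y"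
    using gdist_triangle[of E] finite by (metis enat_ord_simps(1) plus_enat_simps(1))
qed

lemma mult_2_enat_eq_enat_iff: "2 * enat n = enat m \<longleftrightarrow> 2 * n = m"
  by (metis enat_numeral times_enat_simps(1) enat.inject)

theorem lemma2:
  fixes V :: "'a set" and E :: "'a \<Rightarrow> 'a \<Rightarrow> bool" and h :: nat
    and a b c d :: 'a
  assumes "simple_graph V E"
    and "diameter V E = enat h"
    and "hyperbolicity V E = enat h"
    and "a \<in> V" "b \<in> V" "c \<in> V" "d \<in> V"
    and "four_point_delta E a b c d = enat h"
  shows "(gdist E a b = enat h \<and> gdist E c d = enat h \<and>
          2 * gdist E a c = enat h \<and> 2 * gdist E a d = enat h \<and>
          2 * gdist E b c = enat h \<and> 2 * gdist E b d = enat h)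
       \<or> (gdist E a c = enat h \<and> gdist E b d = enat h \<and>
          2 * gdist E a b = enat h \<and> 2 * gdist E a d = enat h \<and>
          2 * gdist E b c = enat h \<and> 2 * gdist E c d = enat h)
       \<or> (gdist E a d = enat h \<and> gdist E b c = enat h \<and>
          2 * gdist E a b = enat h \<and> 2 * gdist E a c = enat h \<and>
          2 * gdist E b d = enat h \<and> 2 * gdist E c d = enat h)"
proof -
  obtain \<rho> where dist: "\<forall>x\<in>V. \<forall>y\<in>V. gdist E x y = enat (\<rho> x y)"
    and metric: "\<forall>x\<in>V. \<forall>y\<in>V. \<rho> x y = \<rho> y x"
      "\<forall>x\<in>V. \<forall>y\<in>V. \<forall>z\<in>V. \<rho> x y \<le> \<rho> x z + \<rho> z y" "\<forall>x\<in>V. \<forall>y\<in>V. \<rho> x y \<le> h"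
    using finite_diameter_obtains_nat_metric[OF assms(1,2)] by blast
  have "gap_two_largest (\<rho> a b + \<rho> c d) (\<rho> a c + \<rho> b d) (\<rho> a d + \<rho> b c) = h"
    using assms(4-8) dist by (simp add: four_point_delta_gap gap_two_largest_enat)
  from extremal_quadruple_trichotomy[OF metric assms(4-7) this]
  show ?thesis
    using assms(4-7) dist by (simp add: mult_2_enat_eq_enat_iff)
qed

end
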